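(* Let $G$ be a graph containing neither the cycle $C_4$ nor the cycle $C_6$ as a subgraph. For every MLD-set $S\subseteq V(G)$, the set $S\cup\pi(S)$ is a locating-dominating set of $G$. Consequently, $\gamma_L(G)\le \gamma_M(G)^2$.
   Context: All graphs are finite, simple, undirected and connected, with at least 2 vertices; $d(u,v)$ is the shortest-path distance and $N(x)$ the open neighborhood of $x$. A set $S\subseteq V(G)$ is resolving if for all distinct $x,y\in V(G)$ there is $u\in S$ with $d(u,x)\ne d(u,y)$; dominating if every vertex not in $S$ has a neighbor in $S$. An MLD-set is a set that is both resolving and dominating; $\gamma_M(G)$ is the minimum size of an MLD-set. A locating-dominating set (LD-set) is a dominating set $S$ such that $N(x)\cap S\ne N(y)\cap S$ for all distinct $x,y\in V(G)\setminus S$; $\gamma_L(G)$ is its minimum size. For $S\subseteq V(G)$ and $u,v\in S$, $\pi(u,v)$ is the set of vertices $u',v'$ such that $(u,u',v',v)$ is a path in $G$ (four distinct vertices with $uu',u'v',v'v\in E(G)$), and $\pi(S)=\bigcup_{u,v\in S}\pi(u,v)$. *)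

theory Defs
  imports Main
begin

fun walk :: "('a \<Rightarrow> 'a \<Rightarrow> bool) \<Rightarrow> 'a list \<Rightarrow> bool" where
  "walk E [] = False"
| "walk E [x] = True"
| "walk E (x # y # xs) = (E x y \<and> walk E (y # xs))"

definition connected_graph :: "'a set \<Rightarrow> ('a \<Rightarrow> 'a \<Rightarrow> bool) \<Rightarrow> bool" where
  "connected_graph V E \<longleftrightarrow>
     (\<forall>u\<in>V. \<forall>v\<in>V. \<exists>p. walk E p \<and> hd p = u \<and> last p = v \<and> set p \<subseteq> V)"

definition graph :: "'a set \<Rightarrow> ('a \<Rightarrow> 'a \<Rightarrow> bool) \<Rightarrow> bool" where
  "graph V E \<longleftrightarrow> finite V \<and> card V \<ge> 2
     \<and> (\<forall>x y. E x y \<longrightarrow> x \<in> V \<and> y \<in> V)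
     \<and> (\<forall>x y. E x y \<longrightarrow> E y x)
     \<and> (\<forall>x. \<not> E x x)
     \<and> connected_graph V E"

definition gdist :: "('a \<Rightarrow> 'a \<Rightarrow> bool) \<Rightarrow> 'a \<Rightarrow> 'a \<Rightarrow> nat" where
  "gdist E u v = (LEAST n. \<exists>p. walk E p \<and> hd p = u \<and> last p = v \<and> length p = Suc n)"

definition nbhd :: "'a set \<Rightarrow> ('a \<Rightarrow> 'a \<Rightarrow> bool) \<Rightarrow> 'a \<Rightarrow> 'a set" where
  "nbhd V E x = {y \<in> V. E x y}"

definition has_C4 :: "'a set \<Rightarrow> ('a \<Rightarrow> 'a \<Rightarrow> bool) \<Rightarrow> bool" where
  "has_C4 V E \<longleftrightarrow> (\<exists>a b c d. distinct [a,b,c,d] \<and> set [a,b,c,d] \<subseteq> V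
      \<and> E a b \<and> E b c \<and> E c d \<and> E d a)"

definition has_C6 :: "'a set \<Rightarrow> ('a \<Rightarrow> 'a \<Rightarrow> bool) \<Rightarrow> bool" where
  "has_C6 V E \<longleftrightarrow> (\<exists>a b c d e f. distinct [a,b,c,d,e,f] \<and> set [a,b,c,d,e,f] \<subseteq> V
      \<and> E a b \<and> E b c \<and> E c d \<and> E d e \<and> E e f \<and> E f a)"

definition resolving :: "'a set \<Rightarrow> ('a \<Rightarrow> 'a \<Rightarrow> bool) \<Rightarrow> 'a set \<Rightarrow> bool" where
  "resolving V E S \<longleftrightarrow> S \<subseteq> V \<and>
     (\<forall>x\<in>V. \<forall>y\<in>V. x \<noteq> y \<longrightarrow> (\<exists>u\<in>S. gdist E u x \<noteq> gdist E u y))"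

definition dominating :: "'a set \<Rightarrow> ('a \<Rightarrow> 'a \<Rightarrow> bool) \<Rightarrow> 'a set \<Rightarrow> bool" where
  "dominating V E S \<longleftrightarrow> S \<subseteq> V \<and> (\<forall>x\<in>V - S. \<exists>y\<in>S. E x y)"

definition MLD_set :: "'a set \<Rightarrow> ('a \<Rightarrow> 'a \<Rightarrow> bool) \<Rightarrow> 'a set \<Rightarrow> bool" where
  "MLD_set V E S \<longleftrightarrow> resolving V E S \<and> dominating V E S"

definition LD_set :: "'a set \<Rightarrow> ('a \<Rightarrow> 'a \<Rightarrow> bool) \<Rightarrow> 'a set \<Rightarrow> bool" where
  "LD_set V E S \<longleftrightarrow> dominating V E S \<and>
     (\<forall>x\<in>V - S. \<forall>y\<in>V - S. x \<noteq> y \<longrightarrow> nbhd V E x \<inter> S \<noteq> nbhd V E y \<inter> S)"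

definition gamma_M :: "'a set \<Rightarrow> ('a \<Rightarrow> 'a \<Rightarrow> bool) \<Rightarrow> nat" where
  "gamma_M V E = Min {card S | S. MLD_set V E S}"

definition gamma_L :: "'a set \<Rightarrow> ('a \<Rightarrow> 'a \<Rightarrow> bool) \<Rightarrow> nat" where
  "gamma_L V E = Min {card S | S. LD_set V E S}"

definition pi_pair :: "('a \<Rightarrow> 'a \<Rightarrow> bool) \<Rightarrow> 'a \<Rightarrow> 'a \<Rightarrow> 'a set" where
  "pi_pair E u v = {w. \<exists>u' v'. (w = u' \<or> w = v') \<and> distinct [u,u',v',v]
       \<and> E u u' \<and> E u' v' \<and> E v' v}"

definition pi_set :: "('a \<Rightarrow> 'a \<Rightarrow> bool) \<Rightarrow> 'a set \<Rightarrow> 'a set" where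
  "pi_set E S = (\<Union>u\<in>S. \<Union>v\<in>S. pi_pair E u v)"

end

theory Submission
  imports Defs
begin

text \<open>
  Let \<open>S\<close> be an MLD-set and \<open>T \<supseteq> S \<union> \<pi>(S)\<close>. If two vertices \<open>x \<noteq> y\<close> outside \<open>T\<close> had the
  same neighbours in \<open>T\<close>, they share a neighbour \<open>s \<in> S\<close>, and \<open>C\<^sub>4\<close>-freeness forces \<open>s\<close> to be
  their only neighbour in \<open>T\<close>. Every other neighbour \<open>w\<close> of \<open>x\<close> then only sees \<open>s\<close> and
  neighbours of \<open>s\<close>: otherwise a path \<open>t, p, q, s\<close> with \<open>t \<in> S\<close> would put \<open>x\<close> or \<open>w\<close> into
  \<open>\<pi>(S)\<close>. Hence every shortest path from \<open>S\<close> to \<open>x\<close> may be rerouted through \<open>s\<close>, so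
  \<open>d(u,x) = d(u,s) + 1 = d(u,y)\<close> for all \<open>u \<in> S\<close>, contradicting that \<open>S\<close> is resolving.

  For the bound, only the vertices \<open>q\<close> of paths \<open>t, p, q, s\<close> with \<open>t\<close> not adjacent to \<open>q\<close> are
  needed; without \<open>C\<^sub>4\<close> and \<open>C\<^sub>6\<close> there is at most one such \<open>q\<close> for each pair \<open>(t,s)\<close>, giving
  an LD-set of size at most \<open>|S|\<^sup>2\<close>.
\<close>

lemma graph_adj_sym: "graph V E \<Longrightarrow> E a b \<Longrightarrow> E b a"
  unfolding graph_def by blast

lemma graph_adj_in_V: "graph V E \<Longrightarrow> E a b \<Longrightarrow> a \<in> V \<and> b \<in> V"
  unfolding graph_def by blast

lemma graph_irrefl: "graph V E \<Longrightarrow> \<not> E a a"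
  unfolding graph_def by blast

definition reach :: "('a \<Rightarrow> 'a \<Rightarrow> bool) \<Rightarrow> 'a \<Rightarrow> 'a \<Rightarrow> nat \<Rightarrow> bool" where
  "reach E u v n \<longleftrightarrow> (\<exists>p. walk E p \<and> hd p = u \<and> last p = v \<and> length p = Suc n)"

lemma walk_snoc: "walk E (xs @ [a, b]) \<longleftrightarrow> walk E (xs @ [a]) \<and> E a b"
  by (induction xs rule: induct_list012) auto

lemma reach_0: "reach E u v 0 \<longleftrightarrow> u = v"
proof
  assume "reach E u v 0"
  then obtain p where "hd p = u" "last p = v" "length p = Suc 0"
    unfolding reach_def by blast
  then show "u = v" by (cases p) auto
next
  assume "u = v"
  then show "reach E u v 0" unfolding reach_def by (intro exI[of _ "[v]"]) simp
qed

lemma reach_Suc: "reach E u v (Suc n) \<longleftrightarrow> (\<exists>w. reach E u w n \<and> E w v)"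
proof
  assume "reach E u v (Suc n)"
  then obtain p where p: "walk E p" "hd p = u" "last p = v" "length p = Suc (Suc n)"
    unfolding reach_def by blast
  then obtain q a where pq: "p = q @ [a, v]"
    by (metis append_butlast_last_id append.assoc append_Cons append_Nil length_0_conv
        length_butlast diff_Suc_1 nat.distinct(1))
  have "walk E (q @ [a])" "E a v" using p(1) pq walk_snoc by metis+
  moreover have "length (q @ [a]) = Suc n" "hd (q @ [a]) = u" using p pq by (cases q; simp)+
  ultimately show "\<exists>w. reach E u w n \<and> E w v"
    unfolding reach_def by (intro exI[of _ a] conjI exI[of _ "q @ [a]"]) auto
next
  assume "\<exists>w. reach E u w n \<and> E w v"
  then obtain w p where p: "walk E p" "hd p = u" "last p = w" "length p = Suc n" "E w v"
    unfolding reach_def by blast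
  then obtain q where q: "p = q @ [w]"
    by (metis append_butlast_last_id list.size(3) nat.distinct(1))
  have "walk E (q @ [w, v])" using walk_snoc p q by metis
  then show "reach E u v (Suc n)" unfolding reach_def
    using p q by (intro exI[of _ "q @ [w, v]"]) (cases q, auto)
qed

lemma gdist_eq_Least: "gdist E u v = (LEAST n. reach E u v n)"
  unfolding gdist_def reach_def by simp

lemma reach_gdist: "reach E u v n \<Longrightarrow> reach E u v (gdist E u v)"
  unfolding gdist_eq_Least by (rule LeastI)

lemma gdist_le: "reach E u v n \<Longrightarrow> gdist E u v \<le> n"
  unfolding gdist_eq_Least by (rule Least_le)

lemma gdist_self: "gdist E u u = 0"
  using gdist_le[of E u u 0] by (simp add: reach_0)

lemma reach_exists:
  assumes "graph V E" "u \<in> V" "v \<in> V"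
  shows "\<exists>n. reach E u v n"
proof -
  obtain p where p: "walk E p" "hd p = u" "last p = v"
    using assms unfolding graph_def connected_graph_def by blast
  then obtain n where "length p = Suc n" by (cases p) auto
  then show ?thesis using p unfolding reach_def by blast
qed

lemma gdist_eq_0_imp_eq:
  assumes "graph V E" "u \<in> V" "v \<in> V" "gdist E u v = 0"
  shows "u = v"
  using reach_gdist[of E u v] reach_exists[OF assms(1-3)] assms(4) by (auto simp: reach_0)

text \<open>The last two steps \<open>z, w, x\<close> of a walk to \<open>x\<close> can be replaced by at most one step to \<open>s\<close>.\<close>

lemma gdist_eq_Suc_through:
  assumes "reach E u s n\<^sub>0" and "E s x" and "u \<noteq> x"
    and near: "\<And>w. E w x \<Longrightarrow> w \<noteq> s \<Longrightarrow> w \<noteq> u \<and> (\<forall>z. E z w \<longrightarrow> z = s \<or> E z s)"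
  shows "gdist E u x = Suc (gdist E u s)"
proof -
  have shorten: "\<exists>m\<le>n. reach E u s m" if rx: "reach E u x (Suc n)" for n
  proof -
    obtain w where rw: "reach E u w n" and wx: "E w x"
      using reach_Suc[THEN iffD1, OF rx] by blast
    show ?thesis
    proof (cases "w = s")
      case False
      with near wx rw obtain n' where n': "n = Suc n'"
        by (cases n) (auto simp: reach_0)
      then obtain z where rz: "reach E u z n'" and "E z w"
        using rw by (auto simp only: reach_Suc)
      then have "z = s \<or> E z s" using near wx False by blast
      then have "reach E u s n' \<or> reach E u s n"
        using rz n' reach_Suc[of E u s n'] by auto
      then show ?thesis using n' by (auto intro: le_SucI)
    qed (use rw in blast)
  qed
  have rs: "reach E u s (gdist E u s)" using assms(1) by (rule reach_gdist)
  then have "reach E u x (Suc (gdist E u s))" using assms(2) reach_Suc[of E u x] by blast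
  then have rx: "reach E u x (gdist E u x)" and up: "gdist E u x \<le> Suc (gdist E u s)"
    by (rule reach_gdist, rule gdist_le)
  have "gdist E u x \<noteq> 0" using rx assms(3) by (metis reach_0)
  then obtain n where n: "gdist E u x = Suc n" by (cases "gdist E u x") auto
  then obtain m where "m \<le> n" "reach E u s m" using shorten[of n] rx by auto
  then show ?thesis using gdist_le[of E u s m] up n by simp
qed

subsection \<open>Far vertices of the sets \<open>\<pi>(t,s)\<close>\<close>

definition pi_far :: "('a \<Rightarrow> 'a \<Rightarrow> bool) \<Rightarrow> 'a \<Rightarrow> 'a \<Rightarrow> 'a set" where
  "pi_far E t s = {q. \<exists>p. distinct [t,p,q,s] \<and> E t p \<and> E p q \<and> E q s \<and> \<not> E t q}"

definition pi_far_set :: "('a \<Rightarrow> 'a \<Rightarrow> bool) \<Rightarrow> 'a set \<Rightarrow> 'a set" where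
  "pi_far_set E S = (\<Union>t\<in>S. \<Union>s\<in>S. pi_far E t s)"

lemma pi_far_subset_pi_pair: "pi_far E t s \<subseteq> pi_pair E t s"
proof
  fix q assume "q \<in> pi_far E t s"
  then obtain p where "distinct [t,p,q,s]" "E t p" "E p q" "E q s"
    unfolding pi_far_def by blast
  then show "q \<in> pi_pair E t s" unfolding pi_pair_def by (intro CollectI exI[of _ p] exI[of _ q]) simp
qed

lemma pi_far_set_subset_pi_set: "pi_far_set E S \<subseteq> pi_set E S"
  unfolding pi_far_set_def pi_set_def by (intro UN_mono[OF order_refl] pi_far_subset_pi_pair)

lemma pi_set_subset_V: "graph V E \<Longrightarrow> pi_set E S \<subseteq> V"
  unfolding pi_set_def pi_pair_def by (auto dest: graph_adj_in_V)

lemma pi_far_self: "pi_far E t t = {}"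
  unfolding pi_far_def by auto

text \<open>Two far vertices of the same pair close a \<open>C\<^sub>4\<close> (common middle vertex) or a \<open>C\<^sub>6\<close>.\<close>

lemma pi_far_unique:
  assumes g: "graph V E" and "\<not> has_C4 V E" "\<not> has_C6 V E"
    and "q \<in> pi_far E t s" "q' \<in> pi_far E t s"
  shows "q = q'"
proof (rule ccontr)
  assume ne: "q \<noteq> q'"
  obtain p where p1: "distinct [t,p,q,s]" "E t p" "E p q" "E q s" "\<not> E t q"
    using assms(4) unfolding pi_far_def by blast
  obtain p' where p2: "distinct [t,p',q',s]" "E t p'" "E p' q'" "E q' s" "\<not> E t q'"
    using assms(5) unfolding pi_far_def by blast
  have rev_edges: "E s q'" "E q' p'" "E p' t" using p2 graph_adj_sym[OF g] by blast+
  have inV: "{t, p, q, s, q', p'} \<subseteq> V" using p1 p2 graph_adj_in_V[OF g] by blast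
  show False
  proof (cases "p = p'")
    case True
    then have "distinct [p,q,s,q']" using p1(1) p2(1) ne by auto
    then have "has_C4 V E"
      unfolding has_C4_def using True p1(3,4) rev_edges(1,2) inV by fastforce
    with assms(2) show False ..
  next
    case False
    then have "distinct [t,p,q,s,q',p']" using p1 p2 ne by auto
    then have "has_C6 V E"
      unfolding has_C6_def using p1(2-4) rev_edges inV by fastforce
    with assms(3) show False ..
  qed
qed

lemma card_union_pi_far_set_le:
  assumes "finite S" and unique: "\<And>t s q q'. q \<in> pi_far E t s \<Longrightarrow> q' \<in> pi_far E t s \<Longrightarrow> q = q'"
  shows "card (S \<union> pi_far_set E S) \<le> card S ^ 2"
proof -
  define f where "f = (\<lambda>(t, s). if pi_far E t s = {} then t else the_elem (pi_far E t s))"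
  have "S \<union> pi_far_set E S \<subseteq> f ` (S \<times> S)"
  proof
    fix z assume "z \<in> S \<union> pi_far_set E S"
    then consider "z \<in> S" | t s where "t \<in> S" "s \<in> S" "z \<in> pi_far E t s"
      unfolding pi_far_set_def by blast
    then show "z \<in> f ` (S \<times> S)"
    proof cases
      case 1
      then show ?thesis by (intro rev_image_eqI[of "(z, z)"]) (auto simp: f_def pi_far_self)
    next
      case 2
      then have "pi_far E t s = {z}" using unique by blast
      with 2 show ?thesis by (intro rev_image_eqI[of "(t, s)"]) (auto simp: f_def)
    qed
  qed
  then have "card (S \<union> pi_far_set E S) \<le> card (f ` (S \<times> S))"
    using assms(1) by (intro card_mono) auto
  also have "\<dots> \<le> card (S \<times> S)" using assms(1) by (intro card_image_le) auto
  finally show ?thesis by (simp add: card_cartesian_product power2_eq_square)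
qed

subsection \<open>Locating-dominating supersets of MLD-sets\<close>

lemma pi_far_set_mem:
  "t \<in> S \<Longrightarrow> s \<in> S \<Longrightarrow> distinct [t,p,q,s] \<Longrightarrow> E t p \<Longrightarrow> E p q \<Longrightarrow> E q s \<Longrightarrow> \<not> E t q
    \<Longrightarrow> q \<in> pi_far_set E S"
  unfolding pi_far_set_def pi_far_def by blast

lemma neighbour_of_private_vertex:
  assumes g: "graph V E" and dom: "dominating V E S"
    and ST: "S \<subseteq> T" and far: "pi_far_set E S \<subseteq> T"
    and "x \<notin> T" "s \<in> S" "E x s" and only_s: "\<And>w. E x w \<Longrightarrow> w \<noteq> s \<Longrightarrow> w \<notin> T"
    and "E x w" "w \<noteq> s"
  shows "w \<notin> S" "E z w \<Longrightarrow> z = s \<or> E z s"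
proof -
  note sym = graph_adj_sym[OF g] and irr = graph_irrefl[OF g]
  show wS: "w \<notin> S" using only_s assms(9,10) ST by blast
  have only_s_in_S: "t = s" if "t \<in> S" "E t w" for t
  proof (rule ccontr)
    assume "t \<noteq> s"
    then have "\<not> E t x" using only_s that ST sym by blast
    moreover have "distinct [t,w,x,s]"
      using that \<open>t \<noteq> s\<close> wS \<open>x \<notin> T\<close> ST \<open>w \<noteq> s\<close> \<open>E x w\<close> \<open>E x s\<close> irr by auto
    ultimately have "x \<in> T"
      using pi_far_set_mem[of t S s w x E] that far assms(6-9) sym by blast
    with \<open>x \<notin> T\<close> show False ..
  qed
  have "E w s"
    using dom wS graph_adj_in_V[OF g \<open>E x w\<close>] only_s_in_S sym unfolding dominating_def by blast
  show "z = s \<or> E z s" if zw: "E z w"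
  proof (rule ccontr)
    assume nz: "\<not> (z = s \<or> E z s)"
    then have zS: "z \<notin> S" using only_s_in_S zw by blast
    then obtain t where "t \<in> S" "E z t"
      using dom graph_adj_in_V[OF g zw] unfolding dominating_def by blast
    then have "t \<noteq> s" "\<not> E t w" using nz only_s_in_S sym by blast+
    moreover have "distinct [t,z,w,s]"
      using \<open>t \<in> S\<close> \<open>t \<noteq> s\<close> zS wS nz \<open>w \<noteq> s\<close> irr zw by auto
    ultimately have "w \<in> T"
      using pi_far_set_mem[of t S s z w E] \<open>t \<in> S\<close> \<open>s \<in> S\<close> \<open>E z t\<close> zw \<open>E w s\<close> far sym by blast
    with only_s \<open>E x w\<close> \<open>w \<noteq> s\<close> show False by blast
  qed
qed

lemma gdist_private_vertex:
  assumes g: "graph V E" and dom: "dominating V E S"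
    and ST: "S \<subseteq> T" and far: "pi_far_set E S \<subseteq> T"
    and "x \<notin> T" "s \<in> S" "E x s" and only_s: "\<And>w. E x w \<Longrightarrow> w \<noteq> s \<Longrightarrow> w \<notin> T"
    and "u \<in> S"
  shows "gdist E u x = Suc (gdist E u s)"
proof -
  obtain n where "reach E u s n"
    using reach_exists[OF g] assms(6,9) dom unfolding dominating_def by blast
  then show ?thesis
  proof (rule gdist_eq_Suc_through)
    show "E s x" using graph_adj_sym[OF g \<open>E x s\<close>] .
    show "u \<noteq> x" using assms(5,9) ST by blast
    fix w assume "E w x" "w \<noteq> s"
    then have "E x w" using graph_adj_sym[OF g] by blast
    then show "w \<noteq> u \<and> (\<forall>z. E z w \<longrightarrow> z = s \<or> E z s)"
      using neighbour_of_private_vertex[OF assms(1-8) _ \<open>w \<noteq> s\<close>] \<open>u \<in> S\<close> by blast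
  qed
qed

lemma LD_set_superset_of_MLD_set:
  assumes g: "graph V E" and c4: "\<not> has_C4 V E" and mld: "MLD_set V E S"
    and ST: "S \<subseteq> T" and TV: "T \<subseteq> V" and far: "pi_far_set E S \<subseteq> T"
  shows "LD_set V E T"
proof -
  have dom: "dominating V E S" and res: "resolving V E S"
    using mld unfolding MLD_set_def by blast+
  have only_s: "w \<notin> T"
    if "x \<notin> T" "y \<notin> T" "x \<noteq> y" "E x s" "E y s" "s \<in> S"
      and eq: "nbhd V E x \<inter> T = nbhd V E y \<inter> T" and "E x w" "w \<noteq> s" for x y s w
  proof
    assume "w \<in> T"
    then have "E y w" using eq \<open>E x w\<close> graph_adj_in_V[OF g] unfolding nbhd_def by blast
    have "distinct [x,w,y,s]"
      using that \<open>w \<in> T\<close> ST graph_irrefl[OF g, of x] by auto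
    then have "has_C4 V E" unfolding has_C4_def
      using \<open>E x w\<close> graph_adj_sym[OF g \<open>E y w\<close>] \<open>E y s\<close> graph_adj_sym[OF g \<open>E x s\<close>]
        graph_adj_in_V[OF g \<open>E x w\<close>] graph_adj_in_V[OF g \<open>E y s\<close>]
      by (intro exI[of _ x] exI[of _ w] exI[of _ y] exI[of _ s]) auto
    with c4 show False ..
  qed
  have "nbhd V E x \<inter> T \<noteq> nbhd V E y \<inter> T" if x: "x \<in> V - T" and y: "y \<in> V - T" and "x \<noteq> y" for x y
  proof
    assume eq: "nbhd V E x \<inter> T = nbhd V E y \<inter> T"
    obtain s where s: "s \<in> S" "E x s"
      using dom x ST unfolding dominating_def by blast
    then have "s \<in> nbhd V E x \<inter> T" using ST graph_adj_in_V[OF g \<open>E x s\<close>] unfolding nbhd_def by blast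
    then have "E y s" using eq unfolding nbhd_def by blast
    have "x \<notin> T" "y \<notin> T" using x y by blast+
    obtain u where u: "u \<in> S" "gdist E u x \<noteq> gdist E u y"
      using res x y \<open>x \<noteq> y\<close> unfolding resolving_def by blast
    have "gdist E u x = Suc (gdist E u s)"
      using only_s[OF \<open>x \<notin> T\<close> \<open>y \<notin> T\<close> \<open>x \<noteq> y\<close> s(2) \<open>E y s\<close> s(1) eq]
      by (rule gdist_private_vertex[OF g dom ST far \<open>x \<notin> T\<close> s _ u(1)])
    moreover have "gdist E u y = Suc (gdist E u s)"
      using only_s[OF \<open>y \<notin> T\<close> \<open>x \<notin> T\<close> \<open>x \<noteq> y\<close>[symmetric] \<open>E y s\<close> s(2) s(1) eq[symmetric]]
      by (rule gdist_private_vertex[OF g dom ST far \<open>y \<notin> T\<close> s(1) \<open>E y s\<close> _ u(1)])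
    ultimately show False using u(2) by simp
  qed
  moreover have "dominating V E T" using dom ST TV unfolding dominating_def by blast
  ultimately show ?thesis unfolding LD_set_def by blast
qed

lemma MLD_set_V:
  assumes "graph V E"
  shows "MLD_set V E V"
proof -
  have "\<exists>u\<in>V. gdist E u x \<noteq> gdist E u y" if "x \<in> V" "y \<in> V" "x \<noteq> y" for x y
  proof
    show "gdist E x x \<noteq> gdist E x y"
      using gdist_self[of E x] gdist_eq_0_imp_eq[OF assms that(1,2)] that(3) by metis
  qed (fact that(1))
  then show ?thesis unfolding MLD_set_def resolving_def dominating_def by blast
qed

lemma finite_card_image_Collect:
  "finite V \<Longrightarrow> (\<And>S. P S \<Longrightarrow> S \<subseteq> V) \<Longrightarrow> finite {card S | S. P S}"
  by (rule finite_subset[of _ "card ` Pow V"]) auto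

lemma gamma_M_attained:
  assumes "graph V E"
  obtains S where "MLD_set V E S" "card S = gamma_M V E"
proof -
  have "finite {card S | S. MLD_set V E S}"
    using assms by (intro finite_card_image_Collect[of V])
      (auto simp: graph_def MLD_set_def resolving_def)
  moreover have "card V \<in> {card S | S. MLD_set V E S}" using MLD_set_V[OF assms] by blast
  ultimately have "gamma_M V E \<in> {card S | S. MLD_set V E S}"
    unfolding gamma_M_def by (intro Min_in) auto
  then show ?thesis using that by auto
qed

lemma gamma_L_le_card:
  assumes "graph V E" "LD_set V E T"
  shows "gamma_L V E \<le> card T"
proof -
  have "finite {card S | S. LD_set V E S}"
    using assms(1) by (intro finite_card_image_Collect[of V])
      (auto simp: graph_def LD_set_def dominating_def)
  then show ?thesis unfolding gamma_L_def using assms(2) by (intro Min_le) auto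
qed

theorem proposition5:
  fixes V :: "'a set" and E :: "'a \<Rightarrow> 'a \<Rightarrow> bool"
  assumes "graph V E"
    and "\<not> has_C4 V E"
    and "\<not> has_C6 V E"
  shows "(\<forall>S. MLD_set V E S \<longrightarrow> LD_set V E (S \<union> pi_set E S))
         \<and> gamma_L V E \<le> (gamma_M V E)^2"
proof
  have LD: "LD_set V E (S \<union> X)" if "MLD_set V E S" "X \<subseteq> V" "pi_far_set E S \<subseteq> X" for S X
  proof (rule LD_set_superset_of_MLD_set[OF assms(1,2) that(1)])
    show "S \<union> X \<subseteq> V" using that unfolding MLD_set_def resolving_def by blast
  qed (use that(3) in auto)
  show "\<forall>S. MLD_set V E S \<longrightarrow> LD_set V E (S \<union> pi_set E S)"
    using LD[OF _ pi_set_subset_V[OF assms(1)] pi_far_set_subset_pi_set] by blast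
  obtain S where S: "MLD_set V E S" "card S = gamma_M V E"
    using gamma_M_attained[OF assms(1)] .
  have "finite S"
    using S(1) assms(1) unfolding MLD_set_def resolving_def graph_def by (auto intro: finite_subset)
  have "pi_far_set E S \<subseteq> V"
    using pi_far_set_subset_pi_set pi_set_subset_V[OF assms(1)] by (rule order_trans)
  then have "gamma_L V E \<le> card (S \<union> pi_far_set E S)"
    by (intro gamma_L_le_card[OF assms(1)] LD[OF S(1)] order_refl)
  also have "\<dots> \<le> card S ^ 2"
    using card_union_pi_far_set_le[OF \<open>finite S\<close> pi_far_unique[OF assms]] .
  finally show "gamma_L V E \<le> (gamma_M V E)^2" using S(2) by simp
qed

end
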